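(* Let $\Bbbk$ be a field and $\mathcal{C}$ an additive pivotal $\Bbbk$-category in which every indecomposable object is absolutely indecomposable and every element of the radical of the endomorphism ring of an indecomposable object is nilpotent. Let $V$ be an absolutely simple object of $\mathcal{C}$, and fix a decomposition $V\otimes V^*=\bigoplus_{k\in I}W_k$ into indecomposable objects, with inclusions $i_k:W_k\to V\otimes V^*$, projections $p_k:V\otimes V^*\to W_k$ ($p_ki_k=\mathrm{Id}_{W_k}$), and idempotents $e_k=i_kp_k$ (pairwise orthogonal, summing to $\mathrm{Id}_{V\otimes V^*}$). Then there is a unique $j\in I$ satisfying the following equivalent conditions: (1) $e_j\,\mathrm{coev}_V=\mathrm{coev}_V$; (2) $\operatorname{Hom}_{\mathcal{C}}(\mathbb{1},W_j)$ is non-zero and is spanned by $p_j\,\mathrm{coev}_V$. There is also a unique $j'\in I$ satisfying the following equivalent conditions: (1') $\widetilde{\mathrm{ev}}_V\,e_{j'}=\widetilde{\mathrm{ev}}_V$; (2') $\operatorname{Hom}_{\mathcal{C}}(W_{j'},\mathbb{1})$ is non-zero and is spanned by $\widetilde{\mathrm{ev}}_V\, i_{j'}$.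
   Context: A (strict) tensor category $\mathcal{C}$ with unit $\mathbb{1}$ has a left duality if each object $V$ has an object $V^*$ and morphisms $\mathrm{coev}_V:\mathbb{1}\to V\otimes V^*$, $\mathrm{ev}_V:V^*\otimes V\to\mathbb{1}$ satisfying the zig-zag identities; a right duality consists of morphisms $\widetilde{\mathrm{coev}}_V:\mathbb{1}\to V^*\otimes V$, $\widetilde{\mathrm{ev}}_V:V\otimes V^*\to\mathbb{1}$ satisfying the analogous zig-zag identities. A pivotal category is a tensor category with compatible left and right dualities (same dual objects, same dual morphisms $f^*$, same isomorphisms $W^*\otimes V^*\cong (V\otimes W)^*$). A tensor $\Bbbk$-category is a tensor category whose hom-sets are $\Bbbk$-modules, with composition and tensor product bilinear, and $\operatorname{End}(\mathbb{1})$ free of rank one (identified with $\Bbbk$). An object $V$ is absolutely simple if $\operatorname{End}_{\mathcal{C}}(V)$ is free of rank one over $\Bbbk$ (i.e. $\Bbbk\to\operatorname{End}(V)$, $k\mapsto k\,\mathrm{Id}_V$ is an isomorphism), and absolutely indecomposable if $\operatorname{End}_{\mathcal{C}}(V)/\operatorname{Rad}(\operatorname{End}_{\mathcal{C}}(V))\cong\Bbbk$. *)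

theory Defs
  imports Main
begin

text \<open>A strict pivotal tensor category with linear (over a field) hom-sets,
  encoded concretely: objects of type 'o, morphisms of type 'm, scalars of type 'k.
  Composition: cmp g f means g after f.\<close>

record ('o, 'm, 'k) pkcat =
  Obj   :: "'o set"
  Arr   :: "'m set"
  dom   :: "'m \<Rightarrow> 'o"
  cod   :: "'m \<Rightarrow> 'o"
  cmp   :: "'m \<Rightarrow> 'm \<Rightarrow> 'm"
  idm   :: "'o \<Rightarrow> 'm"
  otens :: "'o \<Rightarrow> 'o \<Rightarrow> 'o"
  mtens :: "'m \<Rightarrow> 'm \<Rightarrow> 'm"
  unit  :: "'o"
  dual  :: "'o \<Rightarrow> 'o"
  coev  :: "'o \<Rightarrow> 'm"
  ev    :: "'o \<Rightarrow> 'm"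
  coevt :: "'o \<Rightarrow> 'm"
  evt   :: "'o \<Rightarrow> 'm"
  madd  :: "'m \<Rightarrow> 'm \<Rightarrow> 'm"
  msmult :: "'k \<Rightarrow> 'm \<Rightarrow> 'm"
  mzero :: "'o \<Rightarrow> 'o \<Rightarrow> 'm"

definition Hom :: "('o, 'm, 'k) pkcat \<Rightarrow> 'o \<Rightarrow> 'o \<Rightarrow> 'm set" where
  "Hom C a b = {f \<in> Arr C. dom C f = a \<and> cod C f = b}"

abbreviation End :: "('o, 'm, 'k) pkcat \<Rightarrow> 'o \<Rightarrow> 'm set" where
  "End C a \<equiv> Hom C a a"

definition is_category :: "('o, 'm, 'k) pkcat \<Rightarrow> bool" where
  "is_category C \<longleftrightarrow>
     (\<forall>f \<in> Arr C. dom C f \<in> Obj C \<and> cod C f \<in> Obj C) \<and>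
     (\<forall>a \<in> Obj C. idm C a \<in> Hom C a a) \<and>
     (\<forall>a \<in> Obj C. \<forall>b \<in> Obj C. \<forall>c \<in> Obj C. \<forall>f \<in> Hom C a b. \<forall>g \<in> Hom C b c.
        cmp C g f \<in> Hom C a c) \<and>
     (\<forall>a \<in> Obj C. \<forall>b \<in> Obj C. \<forall>f \<in> Hom C a b.
        cmp C (idm C b) f = f \<and> cmp C f (idm C a) = f) \<and>
     (\<forall>a \<in> Obj C. \<forall>b \<in> Obj C. \<forall>c \<in> Obj C. \<forall>d \<in> Obj C.
      \<forall>f \<in> Hom C a b. \<forall>g \<in> Hom C b c. \<forall>h \<in> Hom C c d.
        cmp C h (cmp C g f) = cmp C (cmp C h g) f)"

definition is_strict_tensor :: "('o, 'm, 'k) pkcat \<Rightarrow> bool" where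
  "is_strict_tensor C \<longleftrightarrow>
     unit C \<in> Obj C \<and>
     (\<forall>a \<in> Obj C. \<forall>b \<in> Obj C. otens C a b \<in> Obj C) \<and>
     (\<forall>a \<in> Obj C. \<forall>b \<in> Obj C. \<forall>c \<in> Obj C. \<forall>d \<in> Obj C.
      \<forall>f \<in> Hom C a b. \<forall>g \<in> Hom C c d.
        mtens C f g \<in> Hom C (otens C a c) (otens C b d)) \<and>
     (\<forall>a \<in> Obj C. \<forall>b \<in> Obj C. mtens C (idm C a) (idm C b) = idm C (otens C a b)) \<and>
     (\<forall>a \<in> Obj C. \<forall>b \<in> Obj C. \<forall>c \<in> Obj C. \<forall>a' \<in> Obj C. \<forall>b' \<in> Obj C. \<forall>c' \<in> Obj C.
      \<forall>f \<in> Hom C a b. \<forall>g \<in> Hom C b c. \<forall>f' \<in> Hom C a' b'. \<forall>g' \<in> Hom C b' c'.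
        mtens C (cmp C g f) (cmp C g' f') = cmp C (mtens C g g') (mtens C f f')) \<and>
     (\<forall>a \<in> Obj C. \<forall>b \<in> Obj C. \<forall>c \<in> Obj C.
        otens C (otens C a b) c = otens C a (otens C b c)) \<and>
     (\<forall>a \<in> Obj C. otens C (unit C) a = a \<and> otens C a (unit C) = a) \<and>
     (\<forall>f \<in> Arr C. \<forall>g \<in> Arr C. \<forall>h \<in> Arr C.
        mtens C (mtens C f g) h = mtens C f (mtens C g h)) \<and>
     (\<forall>f \<in> Arr C. mtens C (idm C (unit C)) f = f \<and> mtens C f (idm C (unit C)) = f)"

definition has_left_duality :: "('o, 'm, 'k) pkcat \<Rightarrow> bool" where
  "has_left_duality C \<longleftrightarrow>
     (\<forall>V \<in> Obj C. dual C V \<in> Obj C \<and>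
        coev C V \<in> Hom C (unit C) (otens C V (dual C V)) \<and>
        ev C V \<in> Hom C (otens C (dual C V) V) (unit C) \<and>
        cmp C (mtens C (idm C V) (ev C V)) (mtens C (coev C V) (idm C V)) = idm C V \<and>
        cmp C (mtens C (ev C V) (idm C (dual C V))) (mtens C (idm C (dual C V)) (coev C V))
          = idm C (dual C V))"

definition has_right_duality :: "('o, 'm, 'k) pkcat \<Rightarrow> bool" where
  "has_right_duality C \<longleftrightarrow>
     (\<forall>V \<in> Obj C. dual C V \<in> Obj C \<and>
        coevt C V \<in> Hom C (unit C) (otens C (dual C V) V) \<and>
        evt C V \<in> Hom C (otens C V (dual C V)) (unit C) \<and>
        cmp C (mtens C (evt C V) (idm C V)) (mtens C (idm C V) (coevt C V)) = idm C V \<and>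
        cmp C (mtens C (idm C (dual C V)) (evt C V)) (mtens C (coevt C V) (idm C (dual C V)))
          = idm C (dual C V))"

definition ldual_mor :: "('o, 'm, 'k) pkcat \<Rightarrow> 'o \<Rightarrow> 'o \<Rightarrow> 'm \<Rightarrow> 'm" where
  "ldual_mor C V W f =
     cmp C (mtens C (ev C W) (idm C (dual C V)))
       (cmp C (mtens C (mtens C (idm C (dual C W)) f) (idm C (dual C V)))
              (mtens C (idm C (dual C W)) (coev C V)))"

definition rdual_mor :: "('o, 'm, 'k) pkcat \<Rightarrow> 'o \<Rightarrow> 'o \<Rightarrow> 'm \<Rightarrow> 'm" where
  "rdual_mor C V W f =
     cmp C (mtens C (idm C (dual C V)) (evt C W))
       (cmp C (mtens C (mtens C (idm C (dual C V)) f) (idm C (dual C W)))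
              (mtens C (coevt C V) (idm C (dual C W))))"

text \<open>Canonical isomorphisms W^* \<otimes> V^* \<rightarrow> (V \<otimes> W)^* from the left, resp. right, duality.\<close>
definition lgamma :: "('o, 'm, 'k) pkcat \<Rightarrow> 'o \<Rightarrow> 'o \<Rightarrow> 'm" where
  "lgamma C V W =
     cmp C (mtens C (ev C W) (idm C (dual C (otens C V W))))
       (cmp C (mtens C (mtens C (idm C (dual C W)) (ev C V))
                       (idm C (otens C W (dual C (otens C V W)))))
              (mtens C (idm C (otens C (dual C W) (dual C V))) (coev C (otens C V W))))"

definition rgamma :: "('o, 'm, 'k) pkcat \<Rightarrow> 'o \<Rightarrow> 'o \<Rightarrow> 'm" where
  "rgamma C V W =
     cmp C (mtens C (idm C (dual C (otens C V W))) (evt C V))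
       (cmp C (mtens C (mtens C (idm C (otens C (dual C (otens C V W)) V)) (evt C W))
                       (idm C (dual C V)))
              (mtens C (coevt C (otens C V W)) (idm C (otens C (dual C W) (dual C V)))))"

definition is_pivotal :: "('o, 'm, 'k) pkcat \<Rightarrow> bool" where
  "is_pivotal C \<longleftrightarrow> is_category C \<and> is_strict_tensor C \<and>
     has_left_duality C \<and> has_right_duality C \<and>
     (\<forall>V \<in> Obj C. \<forall>W \<in> Obj C. \<forall>f \<in> Hom C V W. ldual_mor C V W f = rdual_mor C V W f) \<and>
     (\<forall>V \<in> Obj C. \<forall>W \<in> Obj C. lgamma C V W = rgamma C V W)"

text \<open>Linearity over the field 'k: hom-sets are 'k-vector spaces, composition and
  tensor product are bilinear, and End(1) is free of rank one (identified with 'k).\<close>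
definition is_linear :: "('o, 'm, 'k::field) pkcat \<Rightarrow> bool" where
  "is_linear C \<longleftrightarrow>
     (\<forall>a \<in> Obj C. \<forall>b \<in> Obj C.
        mzero C a b \<in> Hom C a b \<and>
        (\<forall>f \<in> Hom C a b. \<forall>g \<in> Hom C a b. madd C f g \<in> Hom C a b) \<and>
        (\<forall>c. \<forall>f \<in> Hom C a b. msmult C c f \<in> Hom C a b) \<and>
        (\<forall>f \<in> Hom C a b. \<forall>g \<in> Hom C a b. \<forall>h \<in> Hom C a b.
           madd C (madd C f g) h = madd C f (madd C g h)) \<and>
        (\<forall>f \<in> Hom C a b. \<forall>g \<in> Hom C a b. madd C f g = madd C g f) \<and>
        (\<forall>f \<in> Hom C a b. madd C f (mzero C a b) = f) \<and>
        (\<forall>f \<in> Hom C a b. \<exists>g \<in> Hom C a b. madd C f g = mzero C a b) \<and>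
        (\<forall>c d. \<forall>f \<in> Hom C a b. msmult C (c + d) f = madd C (msmult C c f) (msmult C d f)) \<and>
        (\<forall>c. \<forall>f \<in> Hom C a b. \<forall>g \<in> Hom C a b.
           msmult C c (madd C f g) = madd C (msmult C c f) (msmult C c g)) \<and>
        (\<forall>c d. \<forall>f \<in> Hom C a b. msmult C (c * d) f = msmult C c (msmult C d f)) \<and>
        (\<forall>f \<in> Hom C a b. msmult C 1 f = f)) \<and>
     (\<forall>a \<in> Obj C. \<forall>b \<in> Obj C. \<forall>c \<in> Obj C.
      \<forall>f \<in> Hom C a b. \<forall>f' \<in> Hom C a b. \<forall>g \<in> Hom C b c. \<forall>g' \<in> Hom C b c. \<forall>s.
        cmp C (madd C g g') f = madd C (cmp C g f) (cmp C g' f) \<and>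
        cmp C g (madd C f f') = madd C (cmp C g f) (cmp C g f') \<and>
        cmp C (msmult C s g) f = msmult C s (cmp C g f) \<and>
        cmp C g (msmult C s f) = msmult C s (cmp C g f)) \<and>
     (\<forall>a \<in> Obj C. \<forall>b \<in> Obj C. \<forall>c \<in> Obj C. \<forall>d \<in> Obj C.
      \<forall>f \<in> Hom C a b. \<forall>f' \<in> Hom C a b. \<forall>g \<in> Hom C c d. \<forall>g' \<in> Hom C c d. \<forall>s.
        mtens C (madd C f f') g = madd C (mtens C f g) (mtens C f' g) \<and>
        mtens C f (madd C g g') = madd C (mtens C f g) (mtens C f g') \<and>
        mtens C (msmult C s f) g = msmult C s (mtens C f g) \<and>
        mtens C f (msmult C s g) = msmult C s (mtens C f g)) \<and>
     bij_betw (\<lambda>s. msmult C s (idm C (unit C))) UNIV (Hom C (unit C) (unit C))"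

definition is_zero_obj :: "('o, 'm, 'k) pkcat \<Rightarrow> 'o \<Rightarrow> bool" where
  "is_zero_obj C a \<longleftrightarrow> a \<in> Obj C \<and> idm C a = mzero C a a"

definition is_biproduct ::
  "('o, 'm, 'k) pkcat \<Rightarrow> 'o \<Rightarrow> 'o \<Rightarrow> 'o \<Rightarrow> 'm \<Rightarrow> 'm \<Rightarrow> 'm \<Rightarrow> 'm \<Rightarrow> bool" where
  "is_biproduct C S A B iA iB pA pB \<longleftrightarrow>
     S \<in> Obj C \<and> A \<in> Obj C \<and> B \<in> Obj C \<and>
     iA \<in> Hom C A S \<and> iB \<in> Hom C B S \<and> pA \<in> Hom C S A \<and> pB \<in> Hom C S B \<and>
     cmp C pA iA = idm C A \<and> cmp C pB iB = idm C B \<and>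
     cmp C pA iB = mzero C B A \<and> cmp C pB iA = mzero C A B \<and>
     madd C (cmp C iA pA) (cmp C iB pB) = idm C S"

definition is_additive :: "('o, 'm, 'k) pkcat \<Rightarrow> bool" where
  "is_additive C \<longleftrightarrow>
     (\<exists>z. is_zero_obj C z) \<and>
     (\<forall>A \<in> Obj C. \<forall>B \<in> Obj C. \<exists>S iA iB pA pB. is_biproduct C S A B iA iB pA pB)"

definition additive_pivotal_kcat :: "('o, 'm, 'k::field) pkcat \<Rightarrow> bool" where
  "additive_pivotal_kcat C \<longleftrightarrow> is_pivotal C \<and> is_linear C \<and> is_additive C"

definition indecomposable :: "('o, 'm, 'k) pkcat \<Rightarrow> 'o \<Rightarrow> bool" where
  "indecomposable C V \<longleftrightarrow> V \<in> Obj C \<and> \<not> is_zero_obj C V \<and>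
     (\<forall>A B iA iB pA pB. is_biproduct C V A B iA iB pA pB \<longrightarrow>
        is_zero_obj C A \<or> is_zero_obj C B)"

definition left_ideal :: "('o, 'm, 'k) pkcat \<Rightarrow> 'o \<Rightarrow> 'm set \<Rightarrow> bool" where
  "left_ideal C V L \<longleftrightarrow> L \<subseteq> End C V \<and> mzero C V V \<in> L \<and>
     (\<forall>x \<in> L. \<forall>y \<in> L. madd C x y \<in> L) \<and>
     (\<forall>r \<in> End C V. \<forall>x \<in> L. cmp C r x \<in> L)"

definition maximal_left_ideal :: "('o, 'm, 'k) pkcat \<Rightarrow> 'o \<Rightarrow> 'm set \<Rightarrow> bool" where
  "maximal_left_ideal C V L \<longleftrightarrow> left_ideal C V L \<and> L \<noteq> End C V \<and>
     (\<forall>L'. left_ideal C V L' \<and> L \<subseteq> L' \<and> L' \<noteq> End C V \<longrightarrow> L' = L)"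

definition Rad :: "('o, 'm, 'k) pkcat \<Rightarrow> 'o \<Rightarrow> 'm set" where
  "Rad C V = End C V \<inter> \<Inter> {L. maximal_left_ideal C V L}"

text \<open>End(V)/Rad(End(V)) \<cong> 'k as 'k-algebras, i.e. the structure map
  s \<mapsto> s \<cdot> Id_V + Rad is bijective onto the quotient.\<close>
definition abs_indecomposable :: "('o, 'm, 'k::field) pkcat \<Rightarrow> 'o \<Rightarrow> bool" where
  "abs_indecomposable C V \<longleftrightarrow> V \<in> Obj C \<and>
     (\<forall>f \<in> End C V. \<exists>s. \<exists>r \<in> Rad C V. f = madd C (msmult C s (idm C V)) r) \<and>
     (\<forall>s. msmult C s (idm C V) \<in> Rad C V \<longrightarrow> s = 0)"

definition abs_simple :: "('o, 'm, 'k) pkcat \<Rightarrow> 'o \<Rightarrow> bool" where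
  "abs_simple C V \<longleftrightarrow> V \<in> Obj C \<and>
     bij_betw (\<lambda>s. msmult C s (idm C V)) UNIV (End C V)"

fun mpow :: "('o, 'm, 'k) pkcat \<Rightarrow> 'o \<Rightarrow> 'm \<Rightarrow> nat \<Rightarrow> 'm" where
  "mpow C V f 0 = idm C V"
| "mpow C V f (Suc n) = cmp C f (mpow C V f n)"

definition nilpotent_end :: "('o, 'm, 'k) pkcat \<Rightarrow> 'o \<Rightarrow> 'm \<Rightarrow> bool" where
  "nilpotent_end C V f \<longleftrightarrow> (\<exists>n. mpow C V f n = mzero C V V)"

fun hsum :: "('o, 'm, 'k) pkcat \<Rightarrow> 'o \<Rightarrow> 'o \<Rightarrow> (nat \<Rightarrow> 'm) \<Rightarrow> nat \<Rightarrow> 'm" where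
  "hsum C a b f 0 = mzero C a b"
| "hsum C a b f (Suc n) = madd C (hsum C a b f n) (f n)"

end

theory Submission
  imports Defs
begin

(* The proof has two independent ingredients.
   (1) Linear algebra of a line: if Hom(U, X) is one-dimensional, spanned by c, then every
       idempotent e of X satisfies e c = c or e c = 0.  For a decomposition of X this forces
       exactly one e_j to fix c (orthogonality gives uniqueness, e_1 + ... + e_n = id gives
       existence), and e_j c = c holds iff Hom(U, W_j) is spanned by p_j c (lemma
       line_decomposition).
   (2) Duality: by the zig-zag identities every f : 1 \<rightarrow> V \<otimes> V* equals (h \<otimes> id) coev_V for an
       endomorphism h of V; as V is absolutely simple, Hom(1, V \<otimes> V* ) is the line spanned by
       coev_V (lemma coev_spans).
   The statements about the right evaluation are the same facts in the opposite category opc C,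
   in which composition is reversed and the right duality becomes a left duality. *)

definition hom_line :: "('o, 'm, 'k) pkcat \<Rightarrow> 'o \<Rightarrow> 'o \<Rightarrow> 'm \<Rightarrow> bool" where
  "hom_line C a b x \<longleftrightarrow>
     Hom C a b \<noteq> {mzero C a b} \<and> Hom C a b = {msmult C s x | s. True}"

definition left_dual :: "('o, 'm, 'k) pkcat \<Rightarrow> 'o \<Rightarrow> bool" where
  "left_dual C V \<longleftrightarrow> dual C V \<in> Obj C \<and>
     coev C V \<in> Hom C (unit C) (otens C V (dual C V)) \<and>
     ev C V \<in> Hom C (otens C (dual C V) V) (unit C) \<and>
     cmp C (mtens C (idm C V) (ev C V)) (mtens C (coev C V) (idm C V)) = idm C V \<and>
     cmp C (mtens C (ev C V) (idm C (dual C V))) (mtens C (idm C (dual C V)) (coev C V))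
       = idm C (dual C V)"

definition decomposition ::
  "('o, 'm, 'k) pkcat \<Rightarrow> 'o \<Rightarrow> nat \<Rightarrow> (nat \<Rightarrow> 'o) \<Rightarrow> (nat \<Rightarrow> 'm) \<Rightarrow> (nat \<Rightarrow> 'm) \<Rightarrow> bool" where
  "decomposition C X n W i p \<longleftrightarrow>
     (\<forall>k < n. i k \<in> Hom C (W k) X \<and> p k \<in> Hom C X (W k) \<and> cmp C (p k) (i k) = idm C (W k)) \<and>
     (\<forall>k < n. \<forall>l < n. k \<noteq> l \<longrightarrow> cmp C (cmp C (i k) (p k)) (cmp C (i l) (p l)) = mzero C X X) \<and>
     hsum C X X (\<lambda>k. cmp C (i k) (p k)) n = idm C X"

definition opc :: "('o, 'm, 'k) pkcat \<Rightarrow> ('o, 'm, 'k) pkcat" where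
  "opc C = C\<lparr>dom := cod C, cod := dom C, cmp := (\<lambda>g f. cmp C f g),
     mzero := (\<lambda>a b. mzero C b a),
     coev := evt C, ev := coevt C, coevt := ev C, evt := coev C\<rparr>"

lemma opc_simps [simp]:
  "Obj (opc C) = Obj C" "Arr (opc C) = Arr C" "dom (opc C) = cod C" "cod (opc C) = dom C"
  "cmp (opc C) g f = cmp C f g" "idm (opc C) = idm C"
  "otens (opc C) = otens C" "mtens (opc C) = mtens C" "unit (opc C) = unit C"
  "dual (opc C) = dual C" "coev (opc C) = evt C" "ev (opc C) = coevt C"
  "coevt (opc C) = ev C" "evt (opc C) = coev C"
  "madd (opc C) = madd C" "msmult (opc C) = msmult C" "mzero (opc C) a b = mzero C b a"
  by (simp_all add: opc_def)

lemma Hom_opc [simp]: "Hom (opc C) a b = Hom C b a"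
  by (auto simp: Hom_def)

lemma hsum_opc [simp]: "hsum (opc C) a b f m = hsum C b a f m"
  by (induction m) simp_all

lemma hom_line_opc: "hom_line (opc C) a b x = hom_line C b a x"
  by (simp add: hom_line_def)

lemma decomposition_opc: "decomposition (opc C) X n W p i = decomposition C X n W i p"
  unfolding decomposition_def by auto

lemma pivotal_dualities: "is_pivotal C \<Longrightarrow> has_left_duality C \<and> has_right_duality C"
  by (simp add: is_pivotal_def)

lemma left_dual_of_left_duality: "has_left_duality C \<Longrightarrow> V \<in> Obj C \<Longrightarrow> left_dual C V"
  unfolding has_left_duality_def left_dual_def by simp

lemma left_dual_opc: "has_right_duality C \<Longrightarrow> V \<in> Obj C \<Longrightarrow> left_dual (opc C) V"
  unfolding has_right_duality_def left_dual_def by simp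

lemma abs_simple_opc: "abs_simple (opc C) V = abs_simple C V"
  by (simp add: abs_simple_def)

locale linear_tensor_category =
  fixes C :: "('o, 'm, 'k::field) pkcat"
  assumes category: "is_category C"
    and tensor: "is_strict_tensor C"
    and linear: "is_linear C"
begin

lemma hom_obj: "f \<in> Hom C a b \<Longrightarrow> a \<in> Obj C \<and> b \<in> Obj C"
  using category unfolding is_category_def Hom_def by blast

lemma id_hom: "a \<in> Obj C \<Longrightarrow> idm C a \<in> Hom C a a"
  using category unfolding is_category_def by blast

lemma comp_hom: "f \<in> Hom C a b \<Longrightarrow> g \<in> Hom C b c \<Longrightarrow> cmp C g f \<in> Hom C a c"
  using category hom_obj unfolding is_category_def by blast

lemma id_l: "f \<in> Hom C a b \<Longrightarrow> cmp C (idm C b) f = f"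
  using category hom_obj unfolding is_category_def by blast

lemma id_r: "f \<in> Hom C a b \<Longrightarrow> cmp C f (idm C a) = f"
  using category hom_obj unfolding is_category_def by blast

lemma assoc: "f \<in> Hom C a b \<Longrightarrow> g \<in> Hom C b c \<Longrightarrow> h \<in> Hom C c d \<Longrightarrow>
    cmp C h (cmp C g f) = cmp C (cmp C h g) f"
  using category hom_obj unfolding is_category_def by meson

lemma unit_obj: "unit C \<in> Obj C"
  using tensor unfolding is_strict_tensor_def by meson

lemma otens_obj: "a \<in> Obj C \<Longrightarrow> b \<in> Obj C \<Longrightarrow> otens C a b \<in> Obj C"
  using tensor unfolding is_strict_tensor_def by meson

lemma tens_hom: "f \<in> Hom C a b \<Longrightarrow> g \<in> Hom C c d \<Longrightarrow>
    mtens C f g \<in> Hom C (otens C a c) (otens C b d)"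
  using tensor hom_obj unfolding is_strict_tensor_def by meson

lemma tens_id: "a \<in> Obj C \<Longrightarrow> b \<in> Obj C \<Longrightarrow> mtens C (idm C a) (idm C b) = idm C (otens C a b)"
  using tensor unfolding is_strict_tensor_def by meson

lemma interchange: "f \<in> Hom C a b \<Longrightarrow> g \<in> Hom C b c \<Longrightarrow> f' \<in> Hom C a' b' \<Longrightarrow> g' \<in> Hom C b' c' \<Longrightarrow>
    mtens C (cmp C g f) (cmp C g' f') = cmp C (mtens C g g') (mtens C f f')"
  using tensor hom_obj unfolding is_strict_tensor_def by meson

lemma otens_assoc: "a \<in> Obj C \<Longrightarrow> b \<in> Obj C \<Longrightarrow> c \<in> Obj C \<Longrightarrow>
    otens C (otens C a b) c = otens C a (otens C b c)"
  using tensor unfolding is_strict_tensor_def by meson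

lemma otens_unit: "a \<in> Obj C \<Longrightarrow> otens C (unit C) a = a"  "a \<in> Obj C \<Longrightarrow> otens C a (unit C) = a"
  using tensor unfolding is_strict_tensor_def by meson+

lemma mtens_assoc: "f \<in> Hom C a b \<Longrightarrow> g \<in> Hom C c d \<Longrightarrow> h \<in> Hom C e e' \<Longrightarrow>
    mtens C (mtens C f g) h = mtens C f (mtens C g h)"
  using tensor unfolding is_strict_tensor_def Hom_def by blast

lemma mtens_unit: "f \<in> Hom C a b \<Longrightarrow> mtens C (idm C (unit C)) f = f"
  "f \<in> Hom C a b \<Longrightarrow> mtens C f (idm C (unit C)) = f"
  using tensor unfolding is_strict_tensor_def Hom_def by blast+

lemma zero_hom: "a \<in> Obj C \<Longrightarrow> b \<in> Obj C \<Longrightarrow> mzero C a b \<in> Hom C a b"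
  using linear unfolding is_linear_def by meson

lemma add_hom: "f \<in> Hom C a b \<Longrightarrow> g \<in> Hom C a b \<Longrightarrow> madd C f g \<in> Hom C a b"
  using linear hom_obj unfolding is_linear_def by meson

lemma smult_hom: "f \<in> Hom C a b \<Longrightarrow> msmult C s f \<in> Hom C a b"
  using linear hom_obj unfolding is_linear_def by meson

lemma add_assoc: "f \<in> Hom C a b \<Longrightarrow> g \<in> Hom C a b \<Longrightarrow> h \<in> Hom C a b \<Longrightarrow>
    madd C (madd C f g) h = madd C f (madd C g h)"
  using linear hom_obj unfolding is_linear_def by meson

lemma add_zero: "f \<in> Hom C a b \<Longrightarrow> madd C f (mzero C a b) = f"
  using linear hom_obj unfolding is_linear_def by meson

lemma add_inverse: "f \<in> Hom C a b \<Longrightarrow> \<exists>g \<in> Hom C a b. madd C f g = mzero C a b"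
  using linear hom_obj unfolding is_linear_def by meson

lemma smult_add: "f \<in> Hom C a b \<Longrightarrow> msmult C (s + t) f = madd C (msmult C s f) (msmult C t f)"
  using linear hom_obj unfolding is_linear_def by meson

lemma smult_mult: "f \<in> Hom C a b \<Longrightarrow> msmult C (s * t) f = msmult C s (msmult C t f)"
  using linear hom_obj unfolding is_linear_def by meson

lemma smult_one: "f \<in> Hom C a b \<Longrightarrow> msmult C 1 f = f"
  using linear hom_obj unfolding is_linear_def by meson

lemma comp_addl: "f \<in> Hom C a b \<Longrightarrow> g \<in> Hom C b c \<Longrightarrow> g' \<in> Hom C b c \<Longrightarrow>
    cmp C (madd C g g') f = madd C (cmp C g f) (cmp C g' f)"
  using linear hom_obj unfolding is_linear_def by meson

lemma comp_smultl: "f \<in> Hom C a b \<Longrightarrow> g \<in> Hom C b c \<Longrightarrow>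
    cmp C (msmult C s g) f = msmult C s (cmp C g f)"
  using linear hom_obj unfolding is_linear_def by meson

lemma comp_smultr: "f \<in> Hom C a b \<Longrightarrow> g \<in> Hom C b c \<Longrightarrow>
    cmp C g (msmult C s f) = msmult C s (cmp C g f)"
  using linear hom_obj unfolding is_linear_def by meson

lemma tens_smultl: "f \<in> Hom C a b \<Longrightarrow> g \<in> Hom C c d \<Longrightarrow>
    mtens C (msmult C s f) g = msmult C s (mtens C f g)"
  using linear hom_obj unfolding is_linear_def by meson

lemma add_comm: "f \<in> Hom C a b \<Longrightarrow> g \<in> Hom C a b \<Longrightarrow> madd C f g = madd C g f"
  using linear hom_obj unfolding is_linear_def by meson

lemma smult_distrib: "f \<in> Hom C a b \<Longrightarrow> g \<in> Hom C a b \<Longrightarrow>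
    msmult C s (madd C f g) = madd C (msmult C s f) (msmult C s g)"
  using linear hom_obj unfolding is_linear_def by meson

lemma comp_addr: "f \<in> Hom C a b \<Longrightarrow> f' \<in> Hom C a b \<Longrightarrow> g \<in> Hom C b c \<Longrightarrow>
    cmp C g (madd C f f') = madd C (cmp C g f) (cmp C g f')"
  using linear hom_obj unfolding is_linear_def by meson

lemma tens_addl: "f \<in> Hom C a b \<Longrightarrow> f' \<in> Hom C a b \<Longrightarrow> g \<in> Hom C c d \<Longrightarrow>
    mtens C (madd C f f') g = madd C (mtens C f g) (mtens C f' g)"
  using linear hom_obj unfolding is_linear_def by meson

lemma tens_addr: "f \<in> Hom C a b \<Longrightarrow> g \<in> Hom C c d \<Longrightarrow> g' \<in> Hom C c d \<Longrightarrow>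
    mtens C f (madd C g g') = madd C (mtens C f g) (mtens C f g')"
  using linear hom_obj unfolding is_linear_def by meson

lemma tens_smultr: "f \<in> Hom C a b \<Longrightarrow> g \<in> Hom C c d \<Longrightarrow>
    mtens C f (msmult C s g) = msmult C s (mtens C f g)"
  using linear hom_obj unfolding is_linear_def by meson

lemma end_unit: "bij_betw (\<lambda>s. msmult C s (idm C (unit C))) UNIV (End C (unit C))"
  using linear unfolding is_linear_def by meson

lemma opposite: "linear_tensor_category (opc C)"
proof
  show "is_category (opc C)"
    unfolding is_category_def
    using category by (auto simp: is_category_def id_hom id_l id_r assoc intro: comp_hom)
  show "is_strict_tensor (opc C)"
    using tensor unfolding is_strict_tensor_def by (auto simp: tens_hom interchange)
  show "is_linear (opc C)"
    unfolding is_linear_def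
    by (auto simp: zero_hom add_hom smult_hom add_assoc add_comm add_zero add_inverse smult_add
        smult_distrib smult_mult smult_one comp_addl comp_addr comp_smultl comp_smultr
        tens_addl tens_addr tens_smultl tens_smultr end_unit)
qed

lemma smult_zero: assumes f: "f \<in> Hom C a b" shows "msmult C 0 f = mzero C a b"
proof -
  define x where "x = msmult C 0 f"
  have x: "x \<in> Hom C a b" using smult_hom[OF f] by (simp add: x_def)
  have xx: "madd C x x = x" using smult_add[OF f, of 0 0] by (simp add: x_def)
  obtain g where g: "g \<in> Hom C a b" "madd C x g = mzero C a b" using add_inverse[OF x] by blast
  have "x = madd C x (madd C x g)" using g add_zero[OF x] by simp
  also have "\<dots> = madd C (madd C x x) g" using add_assoc[OF x x g(1)] by simp
  also have "\<dots> = mzero C a b" using xx g by simp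
  finally show ?thesis by (simp add: x_def)
qed

lemma smult_mzero:
  assumes "a \<in> Obj C" "b \<in> Obj C" shows "msmult C s (mzero C a b) = mzero C a b"
proof -
  have z: "mzero C a b \<in> Hom C a b" using zero_hom assms .
  have "msmult C s (mzero C a b) = msmult C s (msmult C 0 (mzero C a b))"
    using smult_zero[OF z] by simp
  also have "\<dots> = msmult C (s * 0) (mzero C a b)" by (rule smult_mult[OF z, symmetric])
  also have "\<dots> = mzero C a b" using smult_zero[OF z] by simp
  finally show ?thesis .
qed

lemma comp_mzero_right:
  assumes g: "g \<in> Hom C b c" and a: "a \<in> Obj C" shows "cmp C g (mzero C a b) = mzero C a c"
proof -
  have z: "mzero C a b \<in> Hom C a b" using zero_hom a hom_obj[OF g] by blast
  have "cmp C g (mzero C a b) = cmp C g (msmult C 0 (mzero C a b))" using smult_zero[OF z] by simp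
  also have "\<dots> = msmult C 0 (cmp C g (mzero C a b))" by (rule comp_smultr[OF z g])
  also have "\<dots> = mzero C a c" by (rule smult_zero[OF comp_hom[OF z g]])
  finally show ?thesis .
qed

lemma comp_mzero_left:
  assumes f: "f \<in> Hom C a b" and c: "c \<in> Obj C" shows "cmp C (mzero C b c) f = mzero C a c"
proof -
  have z: "mzero C b c \<in> Hom C b c" using zero_hom c hom_obj[OF f] by blast
  have "cmp C (mzero C b c) f = cmp C (msmult C 0 (mzero C b c)) f" using smult_zero[OF z] by simp
  also have "\<dots> = msmult C 0 (cmp C (mzero C b c) f)" by (rule comp_smultl[OF f z])
  also have "\<dots> = mzero C a c" by (rule smult_zero[OF comp_hom[OF f z]])
  finally show ?thesis .
qed

lemma smult_cancel:
  assumes f: "f \<in> Hom C a b" and nz: "f \<noteq> mzero C a b"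
    and eq: "msmult C s f = msmult C t f"
  shows "s = t"
proof (rule ccontr)
  assume st: "s \<noteq> t"
  have "msmult C (s - t) f = madd C (msmult C s f) (msmult C (- t) f)"
    using smult_add[OF f, of s "- t"] by simp
  also have "\<dots> = msmult C (t + - t) f" by (simp only: eq smult_add[OF f])
  finally have zero: "msmult C (s - t) f = mzero C a b" using smult_zero[OF f] by simp
  have "f = msmult C (inverse (s - t) * (s - t)) f" using st smult_one[OF f] by simp
  also have "\<dots> = msmult C (inverse (s - t)) (mzero C a b)" by (simp only: smult_mult[OF f] zero)
  also have "\<dots> = mzero C a b" using smult_mzero hom_obj[OF f] by blast
  finally show False using nz by simp
qed

lemma hsum_hom: "(\<And>k. k < m \<Longrightarrow> f k \<in> Hom C a b) \<Longrightarrow> a \<in> Obj C \<Longrightarrow> b \<in> Obj C \<Longrightarrow>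
    hsum C a b f m \<in> Hom C a b"
  by (induction m) (simp_all add: zero_hom add_hom)

lemma hsum_comp:
  assumes f: "\<And>k. k < m \<Longrightarrow> f k \<in> Hom C X Y" and c: "c \<in> Hom C U X" and Y: "Y \<in> Obj C"
  shows "cmp C (hsum C X Y f m) c = hsum C U Y (\<lambda>k. cmp C (f k) c) m"
  using f
proof (induction m)
  case 0
  show ?case using comp_mzero_left[OF c Y] by simp
next
  case (Suc m)
  have sum: "hsum C X Y f m \<in> Hom C X Y" using hsum_hom Suc.prems hom_obj[OF c] Y by simp
  have "cmp C (hsum C X Y f (Suc m)) c = madd C (cmp C (hsum C X Y f m) c) (cmp C (f m) c)"
    using comp_addl[OF c sum] Suc.prems by simp
  then show ?case using Suc by simp
qed

lemma hsum_mzero: "a \<in> Obj C \<Longrightarrow> b \<in> Obj C \<Longrightarrow> (\<And>k. k < m \<Longrightarrow> g k = mzero C a b) \<Longrightarrow>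
    hsum C a b g m = mzero C a b"
  by (induction m) (simp_all add: add_zero zero_hom)

lemma hom_line_nonzero: assumes line: "hom_line C a b x" shows "x \<noteq> mzero C a b"
proof
  assume x: "x = mzero C a b"
  have "msmult C 1 x \<in> Hom C a b" using line unfolding hom_line_def by blast
  then have ab: "a \<in> Obj C" "b \<in> Obj C" using hom_obj by blast+
  have "Hom C a b = {mzero C a b}" using line smult_mzero[OF ab] unfolding hom_line_def x by auto
  then show False using line unfolding hom_line_def by blast
qed

lemma idempotent_on_line:
  assumes c: "c \<in> Hom C U X" and line: "hom_line C U X c"
    and e: "e \<in> Hom C X X" and idem: "cmp C e e = e"
  shows "cmp C e c = c \<or> cmp C e c = mzero C U X"
proof -
  obtain t where t: "cmp C e c = msmult C t c"
    using comp_hom[OF c e] line unfolding hom_line_def by blast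
  have "msmult C (t * t) c = msmult C t (cmp C e c)" using t smult_mult[OF c] by simp
  also have "\<dots> = cmp C e (cmp C e c)" using t comp_smultr[OF c e] by simp
  also have "\<dots> = msmult C t c" using assoc[OF c e e] idem t by simp
  finally have "t * t = t" using smult_cancel[OF c hom_line_nonzero[OF line]] by blast
  then have "t = 0 \<or> t = 1" by (metis mult_cancel_left1)
  then show ?thesis using t smult_one[OF c] smult_zero[OF c] by auto
qed

lemma retract_idempotent:
  assumes i: "i \<in> Hom C W X" and p: "p \<in> Hom C X W" and pi: "cmp C p i = idm C W"
  shows "cmp C (cmp C i p) (cmp C i p) = cmp C i p"
proof -
  have "cmp C p (cmp C i p) = p" using assoc[OF p i p] pi id_l[OF p] by simp
  then show ?thesis using assoc[OF comp_hom[OF p i] p i] by simp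
qed

lemma retract_line_iff:
  assumes c: "c \<in> Hom C U X" and line: "hom_line C U X c"
    and i: "i \<in> Hom C W X" and p: "p \<in> Hom C X W" and pi: "cmp C p i = idm C W"
  shows "cmp C (cmp C i p) c = c \<longleftrightarrow> hom_line C U W (cmp C p c)"
proof
  have pc: "cmp C p c \<in> Hom C U W" using comp_hom[OF c p] .
  have U: "U \<in> Obj C" using hom_obj[OF c] by blast
  have factor: "cmp C (cmp C i p) c = cmp C i (cmp C p c)" using assoc[OF c p i] by simp
  assume fixed: "cmp C (cmp C i p) c = c"
  have nonzero: "cmp C p c \<noteq> mzero C U W"
    using fixed factor comp_mzero_right[OF i U] hom_line_nonzero[OF line] by auto
  have "Hom C U W \<subseteq> {msmult C s (cmp C p c) | s. True}"
  proof
    fix g assume g: "g \<in> Hom C U W"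
    obtain s where s: "cmp C i g = msmult C s c"
      using comp_hom[OF g i] line unfolding hom_line_def by blast
    have "g = cmp C (cmp C p i) g" using pi id_l[OF g] by simp
    also have "\<dots> = cmp C p (cmp C i g)" using assoc[OF g i p] by simp
    also have "\<dots> = msmult C s (cmp C p c)" using s comp_smultr[OF c p] by simp
    finally show "g \<in> {msmult C s (cmp C p c) | s. True}" by blast
  qed
  then show "hom_line C U W (cmp C p c)"
    using nonzero pc smult_hom[OF pc] unfolding hom_line_def by blast
next
  assume line_W: "hom_line C U W (cmp C p c)"
  have pc: "cmp C p c \<in> Hom C U W" using comp_hom[OF c p] .
  have "cmp C p (cmp C (cmp C i p) c) = cmp C p (cmp C i (cmp C p c))"
    using assoc[OF c p i] by simp
  also have "\<dots> = cmp C p c" using assoc[OF pc i p] pi id_l[OF pc] by simp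
  finally have p_absorbs: "cmp C p (cmp C (cmp C i p) c) = cmp C p c" .
  show "cmp C (cmp C i p) c = c"
  proof (rule ccontr)
    assume "cmp C (cmp C i p) c \<noteq> c"
    then have "cmp C (cmp C i p) c = mzero C U X"
      using idempotent_on_line[OF c line comp_hom[OF p i] retract_idempotent[OF i p pi]] by blast
    then have "cmp C p c = mzero C U W"
      using p_absorbs comp_mzero_right[OF p] hom_obj[OF c] by simp
    then show False using hom_line_nonzero[OF line_W] by simp
  qed
qed

lemma line_decomposition:
  assumes c: "c \<in> Hom C U X" and line: "hom_line C U X c"
    and dec: "decomposition C X n W i p"
  shows "(\<forall>j < n. cmp C (cmp C (i j) (p j)) c = c \<longleftrightarrow> hom_line C U (W j) (cmp C (p j) c)) \<and>
         (\<exists>!j. j < n \<and> cmp C (cmp C (i j) (p j)) c = c)"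
proof -
  have ip: "i k \<in> Hom C (W k) X" "p k \<in> Hom C X (W k)" "cmp C (p k) (i k) = idm C (W k)"
    if "k < n" for k using dec that unfolding decomposition_def by auto
  have e: "cmp C (i k) (p k) \<in> Hom C X X" if "k < n" for k using comp_hom ip[OF that] by blast
  have UX: "U \<in> Obj C" "X \<in> Obj C" using hom_obj[OF c] by auto
  have c_nonzero: "c \<noteq> mzero C U X" using hom_line_nonzero[OF line] .
  have unique: "k = l"
    if "k < n" "l < n" "cmp C (cmp C (i k) (p k)) c = c" "cmp C (cmp C (i l) (p l)) c = c" for k l
  proof (rule ccontr)
    assume "k \<noteq> l"
    then have "cmp C (cmp C (i k) (p k)) (cmp C (i l) (p l)) = mzero C X X"
      using dec that unfolding decomposition_def by blast
    then have "c = mzero C U X"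
      using that assoc[OF c e[of l] e[of k]] comp_mzero_left[OF c UX(2)] by simp
    then show False using c_nonzero by simp
  qed
  have exists: "\<exists>j < n. cmp C (cmp C (i j) (p j)) c = c"
  proof (rule ccontr)
    assume "\<not> ?thesis"
    then have zero_terms: "cmp C (cmp C (i k) (p k)) c = mzero C U X" if "k < n" for k
      using idempotent_on_line[OF c line e[OF that] retract_idempotent[OF ip[OF that]]] that
      by blast
    have "hsum C U X (\<lambda>k. cmp C (cmp C (i k) (p k)) c) n = mzero C U X"
      by (rule hsum_mzero[OF UX zero_terms])
    moreover have "hsum C U X (\<lambda>k. cmp C (cmp C (i k) (p k)) c) n
        = cmp C (hsum C X X (\<lambda>k. cmp C (i k) (p k)) n) c"
      using hsum_comp[of n "\<lambda>k. cmp C (i k) (p k)", OF e c UX(2)] by simp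
    moreover have "hsum C X X (\<lambda>k. cmp C (i k) (p k)) n = idm C X"
      using dec unfolding decomposition_def by blast
    ultimately show False using c_nonzero id_l[OF c] by simp
  qed
  have "cmp C (cmp C (i j) (p j)) c = c \<longleftrightarrow> hom_line C U (W j) (cmp C (p j) c)" if "j < n" for j
    using retract_line_iff[OF c line ip[OF that]] .
  then show ?thesis using unique exists by blast
qed

text \<open>Two points x : 1 \<rightarrow> A and y : 1 \<rightarrow> B can be tensored in either order:
  (x \<otimes> id) y = (id \<otimes> y) x, as both equal x \<otimes> y.\<close>
lemma point_slide:
  assumes x: "x \<in> Hom C (unit C) A" and y: "y \<in> Hom C (unit C) B"
  shows "cmp C (mtens C x (idm C B)) y = cmp C (mtens C (idm C A) y) x"
proof -
  have IU: "idm C (unit C) \<in> Hom C (unit C) (unit C)" using id_hom unit_obj by blast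
  have IA: "idm C A \<in> Hom C A A" and IB: "idm C B \<in> Hom C B B"
    using id_hom hom_obj[OF x] hom_obj[OF y] by blast+
  have "cmp C (mtens C x (idm C B)) y = cmp C (mtens C x (idm C B)) (mtens C (idm C (unit C)) y)"
    using mtens_unit(1)[OF y] by simp
  also have "\<dots> = mtens C (cmp C x (idm C (unit C))) (cmp C (idm C B) y)"
    using interchange[OF IU x y IB] by simp
  also have "\<dots> = mtens C (cmp C (idm C A) x) (cmp C y (idm C (unit C)))"
    using id_l id_r x y by simp
  also have "\<dots> = cmp C (mtens C (idm C A) y) (mtens C x (idm C (unit C)))"
    using interchange[OF x IA IU y] by simp
  also have "\<dots> = cmp C (mtens C (idm C A) y) x" using mtens_unit(2)[OF x] by simp
  finally show ?thesis .
qed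

text \<open>Every point f : 1 \<rightarrow> V \<otimes> V* is recovered from the endomorphism (id \<otimes> ev)(f \<otimes> id) of V
  as ((id \<otimes> ev)(f \<otimes> id) \<otimes> id) coev; this is the zig-zag identity for V*.\<close>
lemma coev_absorbs:
  assumes V: "V \<in> Obj C" and dual: "left_dual C V"
    and f: "f \<in> Hom C (unit C) (otens C V (dual C V))"
  shows "cmp C (mtens C (cmp C (mtens C (idm C V) (ev C V)) (mtens C f (idm C V)))
                        (idm C (dual C V))) (coev C V) = f"
proof -
  let ?D = "dual C V" and ?X = "otens C V (dual C V)" and ?U = "unit C"
  have D: "?D \<in> Obj C" and co: "coev C V \<in> Hom C ?U ?X" and ev: "ev C V \<in> Hom C (otens C ?D V) ?U"
    and zigzag: "cmp C (mtens C (ev C V) (idm C ?D)) (mtens C (idm C ?D) (coev C V)) = idm C ?D"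
    using dual unfolding left_dual_def by blast+
  have X: "?X \<in> Obj C" using otens_obj[OF V D] .
  have IV: "idm C V \<in> Hom C V V" and ID: "idm C ?D \<in> Hom C ?D ?D" and IX: "idm C ?X \<in> Hom C ?X ?X"
    using id_hom V D X by blast+
  note objs = otens_assoc otens_unit V D X otens_obj
  have A: "mtens C (idm C V) (ev C V) \<in> Hom C (otens C V (otens C ?D V)) V"
    using tens_hom[OF IV ev] by (simp add: objs)
  have B: "mtens C f (idm C V) \<in> Hom C V (otens C V (otens C ?D V))"
    using tens_hom[OF f IV] by (simp add: objs)
  have T1: "mtens C (idm C V) (mtens C (ev C V) (idm C ?D))
      \<in> Hom C (otens C V (otens C ?D (otens C V ?D))) ?X"
    using tens_hom[OF IV tens_hom[OF ev ID]] by (simp add: objs)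
  have T2: "mtens C f (idm C ?X) \<in> Hom C ?X (otens C V (otens C ?D (otens C V ?D)))"
    using tens_hom[OF f IX] by (simp add: objs)
  have T3: "mtens C (idm C ?X) (coev C V) \<in> Hom C ?X (otens C V (otens C ?D (otens C V ?D)))"
    using tens_hom[OF IX co] by (simp add: objs)
  have P: "mtens C (idm C ?D) (coev C V) \<in> Hom C ?D (otens C ?D ?X)"
    using tens_hom[OF ID co] by (simp add: objs)
  have Q: "mtens C (ev C V) (idm C ?D) \<in> Hom C (otens C ?D ?X) ?D"
    using tens_hom[OF ev ID] by (simp add: objs)
  have split: "mtens C (cmp C (mtens C (idm C V) (ev C V)) (mtens C f (idm C V))) (idm C ?D)
      = cmp C (mtens C (idm C V) (mtens C (ev C V) (idm C ?D))) (mtens C f (idm C ?X))"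
    using interchange[OF B A ID ID] id_l[OF ID] mtens_assoc[OF IV ev ID] mtens_assoc[OF f IV ID]
      tens_id[OF V D] by simp
  have snake: "cmp C (mtens C (idm C V) (mtens C (ev C V) (idm C ?D))) (mtens C (idm C ?X) (coev C V))
      = idm C ?X"
    using interchange[OF IV IV P Q] id_l[OF IV] zigzag mtens_assoc[OF IV ID co] tens_id[OF V D]
    by simp
  have "cmp C (mtens C (idm C V) (mtens C (ev C V) (idm C ?D))) (cmp C (mtens C f (idm C ?X)) (coev C V))
      = cmp C (mtens C (idm C V) (mtens C (ev C V) (idm C ?D))) (cmp C (mtens C (idm C ?X) (coev C V)) f)"
    using point_slide[OF f co] by simp
  also have "\<dots> = f" using assoc[OF f T3 T1] snake id_l[OF f] by simp
  finally show ?thesis using split assoc[OF co T2 T1] by simp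
qed

lemma abs_simple_id_nonzero: "abs_simple C V \<Longrightarrow> idm C V \<noteq> mzero C V V"
  unfolding abs_simple_def bij_betw_def inj_on_def
  by (metis id_hom one_neq_zero smult_one smult_zero UNIV_I)

text \<open>For an absolutely simple V, coev_V is nonzero by the first zig-zag identity.\<close>
lemma coev_nonzero:
  assumes V: "abs_simple C V" and dual: "left_dual C V"
  shows "coev C V \<noteq> mzero C (unit C) (otens C V (dual C V))"
proof
  assume zero: "coev C V = mzero C (unit C) (otens C V (dual C V))"
  let ?D = "dual C V"
  have VO: "V \<in> Obj C" using V unfolding abs_simple_def by blast
  have D: "?D \<in> Obj C" and co: "coev C V \<in> Hom C (unit C) (otens C V ?D)"
    and ev: "ev C V \<in> Hom C (otens C ?D V) (unit C)"
    and zigzag: "cmp C (mtens C (idm C V) (ev C V)) (mtens C (coev C V) (idm C V)) = idm C V"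
    using dual unfolding left_dual_def by blast+
  have IV: "idm C V \<in> Hom C V V" using id_hom[OF VO] .
  note objs = otens_assoc otens_unit VO D unit_obj otens_obj
  have A: "mtens C (idm C V) (ev C V) \<in> Hom C (otens C V (otens C ?D V)) V"
    using tens_hom[OF IV ev] by (simp add: objs)
  have B: "mtens C (coev C V) (idm C V) \<in> Hom C V (otens C V (otens C ?D V))"
    using tens_hom[OF co IV] by (simp add: objs)
  have "idm C V = cmp C (mtens C (idm C V) (ev C V)) (mtens C (msmult C 0 (coev C V)) (idm C V))"
    using zigzag zero smult_zero[OF co] by simp
  also have "\<dots> = msmult C 0 (idm C V)"
    using tens_smultl[OF co IV] comp_smultr[OF B A] zigzag by simp
  finally show False using abs_simple_id_nonzero[OF V] smult_zero[OF IV] by simp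
qed

lemma coev_spans:
  assumes V: "abs_simple C V" and dual: "left_dual C V"
  shows "hom_line C (unit C) (otens C V (dual C V)) (coev C V)"
proof -
  let ?D = "dual C V" and ?X = "otens C V (dual C V)"
  have VO: "V \<in> Obj C" using V unfolding abs_simple_def by blast
  have D: "?D \<in> Obj C" and co: "coev C V \<in> Hom C (unit C) ?X"
    and ev: "ev C V \<in> Hom C (otens C ?D V) (unit C)"
    using dual unfolding left_dual_def by blast+
  have IV: "idm C V \<in> Hom C V V" and ID: "idm C ?D \<in> Hom C ?D ?D" using id_hom VO D by blast+
  have "f \<in> {msmult C s (coev C V) | s. True}" if f: "f \<in> Hom C (unit C) ?X" for f
  proof -
    have "mtens C (idm C V) (ev C V) \<in> Hom C (otens C V (otens C ?D V)) V"
      using tens_hom[OF IV ev] by (simp add: otens_unit VO)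
    moreover have "mtens C f (idm C V) \<in> Hom C V (otens C V (otens C ?D V))"
      using tens_hom[OF f IV] by (simp add: otens_assoc otens_unit VO D)
    ultimately have "cmp C (mtens C (idm C V) (ev C V)) (mtens C f (idm C V)) \<in> Hom C V V"
      using comp_hom by blast
    then obtain s where s: "cmp C (mtens C (idm C V) (ev C V)) (mtens C f (idm C V))
        = msmult C s (idm C V)"
      using V unfolding abs_simple_def bij_betw_def by blast
    have "f = cmp C (mtens C (msmult C s (idm C V)) (idm C ?D)) (coev C V)"
      using coev_absorbs[OF VO dual f] s by simp
    also have "\<dots> = msmult C s (coev C V)"
      using tens_smultl[OF IV ID] tens_id[OF VO D] comp_smultl[OF co] id_hom[OF otens_obj[OF VO D]]
        id_l[OF co] by simp
    finally show ?thesis by blast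
  qed
  then show ?thesis
    using co coev_nonzero[OF V dual] smult_hom[OF co] unfolding hom_line_def by blast
qed

end

text \<open>Lemma 3.1.  The left statements are the line lemma for Hom(1, V \<otimes> V* ) spanned by coev_V;
  the right statements are the same argument in the opposite category, where Hom(V \<otimes> V*, 1)
  is spanned by the right evaluation.\<close>
theorem lemma3p1:
  fixes C :: "('o, 'm, 'k::field) pkcat"
    and V :: 'o and n :: nat
    and W :: "nat \<Rightarrow> 'o" and i p :: "nat \<Rightarrow> 'm"
  assumes cat: "additive_pivotal_kcat C"
    and indec_abs: "\<forall>X. indecomposable C X \<longrightarrow> abs_indecomposable C X"
    and rad_nil: "\<forall>X. indecomposable C X \<longrightarrow> (\<forall>f \<in> Rad C X. nilpotent_end C X f)"
    and V: "abs_simple C V"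
    and W: "\<forall>k < n. W k \<in> Obj C \<and> indecomposable C (W k)"
    and ip: "\<forall>k < n. i k \<in> Hom C (W k) (otens C V (dual C V)) \<and>
                     p k \<in> Hom C (otens C V (dual C V)) (W k) \<and>
                     cmp C (p k) (i k) = idm C (W k)"
    and orth: "\<forall>k < n. \<forall>l < n. k \<noteq> l \<longrightarrow>
                 cmp C (cmp C (i k) (p k)) (cmp C (i l) (p l))
                   = mzero C (otens C V (dual C V)) (otens C V (dual C V))"
    and total: "hsum C (otens C V (dual C V)) (otens C V (dual C V))
                   (\<lambda>k. cmp C (i k) (p k)) n = idm C (otens C V (dual C V))"
  shows "(\<forall>j < n. cmp C (cmp C (i j) (p j)) (coev C V) = coev C V \<longleftrightarrow>
              (Hom C (unit C) (W j) \<noteq> {mzero C (unit C) (W j)} \<and>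
               Hom C (unit C) (W j) = {msmult C s (cmp C (p j) (coev C V)) | s. True})) \<and>
         (\<exists>!j. j < n \<and> cmp C (cmp C (i j) (p j)) (coev C V) = coev C V) \<and>
         (\<forall>j < n. cmp C (evt C V) (cmp C (i j) (p j)) = evt C V \<longleftrightarrow>
              (Hom C (W j) (unit C) \<noteq> {mzero C (W j) (unit C)} \<and>
               Hom C (W j) (unit C) = {msmult C s (cmp C (evt C V) (i j)) | s. True})) \<and>
         (\<exists>!j. j < n \<and> cmp C (evt C V) (cmp C (i j) (p j)) = evt C V)"
proof -
  let ?X = "otens C V (dual C V)"
  have pivotal: "is_pivotal C" and linear: "is_linear C"
    using cat unfolding additive_pivotal_kcat_def by blast+
  interpret linear_tensor_category C
    using pivotal linear by unfold_locales (simp_all add: is_pivotal_def)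
  interpret op: linear_tensor_category "opc C" by (rule opposite)
  have VO: "V \<in> Obj C" using V unfolding abs_simple_def by blast
  have dec: "decomposition C ?X n W i p" using ip orth total unfolding decomposition_def by blast
  have dualities: "has_left_duality C" "has_right_duality C"
    using pivotal_dualities[OF pivotal] by blast+
  have left_dual: "left_dual C V" using left_dual_of_left_duality[OF dualities(1) VO] .
  have right_dual: "left_dual (opc C) V" using left_dual_opc[OF dualities(2) VO] .
  have coev: "coev C V \<in> Hom C (unit C) ?X" using left_dual unfolding left_dual_def by blast
  have evt: "evt C V \<in> Hom C ?X (unit C)" using right_dual unfolding left_dual_def by simp
  have evt_line: "hom_line C ?X (unit C) (evt C V)"
    using op.coev_spans[of V] V right_dual by (simp add: abs_simple_opc hom_line_opc)
  have "(\<forall>j < n. cmp C (cmp C (i j) (p j)) (coev C V) = coev C V \<longleftrightarrow>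
                  hom_line C (unit C) (W j) (cmp C (p j) (coev C V))) \<and>
        (\<exists>!j. j < n \<and> cmp C (cmp C (i j) (p j)) (coev C V) = coev C V)"
    using line_decomposition[OF coev coev_spans[OF V left_dual] dec] .
  moreover have "(\<forall>j < n. cmp C (evt C V) (cmp C (i j) (p j)) = evt C V \<longleftrightarrow>
                  hom_line C (W j) (unit C) (cmp C (evt C V) (i j))) \<and>
        (\<exists>!j. j < n \<and> cmp C (evt C V) (cmp C (i j) (p j)) = evt C V)"
    using op.line_decomposition[of "evt C V" "unit C" ?X n W p i] evt evt_line dec
    by (simp add: hom_line_opc decomposition_opc)
  ultimately show ?thesis unfolding hom_line_def by (elim conjE) (intro conjI; assumption)
qed

end
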